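(* Let $\phi(z)=\sum_{j\in\mathbb{Z}}\phi_jz^j$ with $\sum_j|\phi_j|<\infty$, and set $\phi_+(z)=\sum_{j\ge0}\phi_jz^j$, $\phi_-(z)=\sum_{j<0}\phi_jz^j$. Then for every $t\in\mathbb{C}$ and $n\in\mathbb{N}$, $$\det\left(I+P_n\left(e^{tT(\phi)}-I\right)P_n\right)e^{-t\operatorname{Tr}P_nT(\phi)}=\det\left(I+P_n\left(e^{-tT(\phi_+)}e^{tT(\phi)}e^{-tT(\phi_-)}-I\right)P_n\right).$$
   Context: For a Laurent series $a(z)=\sum_ka_kz^k$, the Toeplitz matrix $T(a)$ on $\ell^2(\mathbb{N})$ has entries $T(a)_{j,k}=a_{j-k}$, $j,k\ge1$. $P_n$ is the orthogonal projection onto the first $n$ coordinates of $\ell^2(\mathbb{N})$. Determinants are Fredholm determinants. *)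

theory Defs
  imports "HOL-Analysis.Infinite_Sum" "Jordan_Normal_Form.Determinant"
begin

text \<open>Bounded operators on l2(N) are represented by their (infinite) matrices
  with respect to the standard basis, indexed from 0 (the paper indexes from 1).
  All operators occurring below (Toeplitz matrices with l1 symbols, their
  exponentials and products) have uniformly l1-bounded rows and columns, so the
  series defining matrix products are absolutely convergent and agree with the
  matrix entries of the operator products.\<close>

type_synonym imat = "nat \<Rightarrow> nat \<Rightarrow> complex"

definition toeplitz :: "(int \<Rightarrow> complex) \<Rightarrow> imat" where
  "toeplitz a j k = a (int j - int k)"

definition imat_id :: imat where
  "imat_id j k = (if j = k then 1 else 0)"

definition imat_mult :: "imat \<Rightarrow> imat \<Rightarrow> imat" where
  "imat_mult A B j k = (\<Sum>l. A j l * B l k)"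

definition imat_scale :: "complex \<Rightarrow> imat \<Rightarrow> imat" where
  "imat_scale c A j k = c * A j k"

primrec imat_pow :: "imat \<Rightarrow> nat \<Rightarrow> imat" where
  "imat_pow A 0 = imat_id"
| "imat_pow A (Suc m) = imat_mult A (imat_pow A m)"

definition imat_exp :: "imat \<Rightarrow> imat" where
  "imat_exp A j k = (\<Sum>m. imat_pow A m j k / of_nat (fact m))"

definition sym_plus :: "(int \<Rightarrow> complex) \<Rightarrow> int \<Rightarrow> complex" where
  "sym_plus \<phi> j = (if 0 \<le> j then \<phi> j else 0)"

definition sym_minus :: "(int \<Rightarrow> complex) \<Rightarrow> int \<Rightarrow> complex" where
  "sym_minus \<phi> j = (if j < 0 then \<phi> j else 0)"

text \<open>Fredholm determinant det(I + P_n (X - I) P_n): the operator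
  P_n (X - I) P_n has finite rank with range in ran P_n, so the Fredholm
  determinant equals the ordinary determinant of the n x n compression
  of I + P_n (X - I) P_n to ran P_n.\<close>
definition fdet_section :: "nat \<Rightarrow> imat \<Rightarrow> complex" where
  "fdet_section n X = det (mat n n (\<lambda>(i, j). imat_id i j + (X i j - imat_id i j)))"

definition trace_section :: "nat \<Rightarrow> imat \<Rightarrow> complex" where
  "trace_section n A = (\<Sum>i<n. A i i)"

end

theory Submission
  imports Defs
begin

text \<open>The operator \<open>exp (-t T(\<phi>\<^sub>+))\<close> is lower triangular with diagonal
  \<open>exp (-t \<phi>\<^sub>0)\<close>, and \<open>exp (-t T(\<phi>\<^sub>-))\<close> is upper triangular with diagonal 1 because
  \<open>\<phi>\<^sub>-\<close> has no constant term. Compressing to the range of \<open>P\<^sub>n\<close> commutes with multiplying by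
  a lower triangular operator on the left and an upper triangular one on the right, so the
  determinant of the compressed product is \<open>exp (-n t \<phi>\<^sub>0) det (P\<^sub>n exp (t T(\<phi>)) P\<^sub>n)\<close>,
  and \<open>n \<phi>\<^sub>0 = Tr P\<^sub>n T(\<phi>)\<close>.\<close>

definition imat_vanishes_on :: "(nat \<Rightarrow> nat \<Rightarrow> bool) \<Rightarrow> imat \<Rightarrow> bool" where
  "imat_vanishes_on R A \<longleftrightarrow> (\<forall>j k. R j k \<longrightarrow> A j k = 0)"

abbreviation imat_lower_triangular :: "imat \<Rightarrow> bool" where
  "imat_lower_triangular \<equiv> imat_vanishes_on (<)"

abbreviation imat_upper_triangular :: "imat \<Rightarrow> bool" where
  "imat_upper_triangular \<equiv> imat_vanishes_on (>)"

definition imat_section :: "nat \<Rightarrow> imat \<Rightarrow> complex mat" where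
  "imat_section n A = mat n n (\<lambda>(i, j). A i j)"

lemma imat_mult_eq_0:
  assumes "\<And>l. A j l * B l k = 0"
  shows "imat_mult A B j k = 0"
  unfolding imat_mult_def by (simp add: assms)

lemma imat_mult_diag:
  assumes "\<And>l. l \<noteq> j \<Longrightarrow> A j l * B l j = 0"
  shows "imat_mult A B j j = A j j * B j j"
  unfolding imat_mult_def using assms by (subst suminf_finite[of "{j}"]) auto

lemma imat_vanishes_on_id: "irreflp R \<Longrightarrow> imat_vanishes_on R imat_id"
  by (auto simp: imat_vanishes_on_def imat_id_def irreflp_on_def)

lemma imat_vanishes_on_mult:
  assumes R: "transp R" "totalp R"
    and A: "imat_vanishes_on R A" and B: "imat_vanishes_on R B"
  shows "imat_vanishes_on R (imat_mult A B)"
  unfolding imat_vanishes_on_def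
proof (intro allI impI)
  fix j k assume "R j k"
  show "imat_mult A B j k = 0"
  proof (rule imat_mult_eq_0)
    fix l
    have "R j l \<or> R l k"
      using R \<open>R j k\<close> by (cases "l = j") (auto simp: totalp_on_def transp_def)
    then show "A j l * B l k = 0"
      using A B by (auto simp: imat_vanishes_on_def)
  qed
qed

lemma imat_vanishes_on_mult_diag:
  assumes R: "totalp R"
    and A: "imat_vanishes_on R A" and B: "imat_vanishes_on R B"
  shows "imat_mult A B j j = A j j * B j j"
proof (rule imat_mult_diag)
  fix l assume "l \<noteq> j"
  then have "R j l \<or> R l j"
    using R by (auto simp: totalp_on_def)
  then show "A j l * B l j = 0"
    using A B by (auto simp: imat_vanishes_on_def)
qed

lemma imat_vanishes_on_pow:
  assumes R: "transp R" "totalp R" "irreflp R" and A: "imat_vanishes_on R A"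
  shows "imat_vanishes_on R (imat_pow A m) \<and> imat_pow A m j j = A j j ^ m"
proof (induction m arbitrary: j)
  case 0
  show ?case by (simp add: imat_vanishes_on_id[OF R(3)] imat_id_def[of j j])
next
  case (Suc m)
  then show ?case
    using R A by (simp add: imat_vanishes_on_mult imat_vanishes_on_mult_diag)
qed

lemma exp_complex_series: "(\<Sum>m. z ^ m / fact m) = exp (z :: complex)"
  by (simp add: exp_def scaleR_conv_of_real divide_inverse mult.commute)

lemma imat_vanishes_on_exp:
  assumes R: "transp R" "totalp R" "irreflp R" and A: "imat_vanishes_on R A"
  shows "imat_vanishes_on R (imat_exp A)" and "imat_exp A j j = exp (A j j)"
  using imat_vanishes_on_pow[OF R A]
  by (auto simp: imat_vanishes_on_def imat_exp_def exp_complex_series)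

lemmas imat_lower_triangular_exp =
  imat_vanishes_on_exp[OF transp_on_less totalp_on_less irreflp_on_less]
lemmas imat_upper_triangular_exp =
  imat_vanishes_on_exp[OF transp_on_greater totalp_on_greater irreflp_on_greater]

lemma fdet_section_eq_det: "fdet_section n X = det (imat_section n X)"
  by (simp add: fdet_section_def imat_section_def)

lemma imat_section_carrier: "imat_section n A \<in> carrier_mat n n"
  by (simp add: imat_section_def)

lemma imat_section_mult:
  assumes "imat_lower_triangular A \<or> imat_upper_triangular B"
  shows "imat_section n (imat_mult A B) = imat_section n A * imat_section n B"
proof (rule eq_matI)
  fix i j assume "i < dim_row (imat_section n A * imat_section n B)"
    "j < dim_col (imat_section n A * imat_section n B)"
  then have ij: "i < n" "j < n" by (auto simp: imat_section_def)
  have "imat_mult A B i j = (\<Sum>l<n. A i l * B l j)"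
    unfolding imat_mult_def
    using assms ij by (intro suminf_finite) (auto simp: imat_vanishes_on_def)
  then show "imat_section n (imat_mult A B) $$ (i, j) =
      (imat_section n A * imat_section n B) $$ (i, j)"
    using ij by (simp add: imat_section_def scalar_prod_def lessThan_atLeast0)
qed (simp_all add: imat_section_def)

lemma det_section_lower_triangular:
  assumes "imat_lower_triangular A"
  shows "det (imat_section n A) = (\<Prod>i<n. A i i)"
proof -
  have "det (imat_section n A) = prod_list (diag_mat (imat_section n A))"
    using assms by (intro det_lower_triangular[OF _ imat_section_carrier])
      (auto simp: imat_section_def imat_vanishes_on_def)
  also have "\<dots> = (\<Prod>i<n. A i i)"
    by (simp add: diag_mat_def imat_section_def prod.list_conv_set_nth lessThan_atLeast0)
  finally show ?thesis .
qed

lemma det_section_upper_triangular: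
  assumes "imat_upper_triangular A"
  shows "det (imat_section n A) = (\<Prod>i<n. A i i)"
proof -
  have "det (imat_section n A) = prod_list (diag_mat (imat_section n A))"
    using assms by (intro det_upper_triangular[OF _ imat_section_carrier])
      (auto simp: imat_section_def imat_vanishes_on_def upper_triangular_def)
  also have "\<dots> = (\<Prod>i<n. A i i)"
    by (simp add: diag_mat_def imat_section_def prod.list_conv_set_nth lessThan_atLeast0)
  finally show ?thesis .
qed

lemma fdet_section_triangular_mult:
  assumes "imat_lower_triangular L" "imat_upper_triangular U"
  shows "fdet_section n (imat_mult L (imat_mult X U))
    = (\<Prod>i<n. L i i) * fdet_section n X * (\<Prod>i<n. U i i)"
  using assms
  by (simp add: fdet_section_eq_det imat_section_mult det_section_lower_triangular
      det_section_upper_triangular det_mult[OF imat_section_carrier]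
      mult_carrier_mat[OF imat_section_carrier imat_section_carrier] imat_section_carrier)

lemma imat_lower_triangular_toeplitz_plus:
  "imat_lower_triangular (imat_scale c (toeplitz (sym_plus \<phi>)))"
  by (auto simp: imat_vanishes_on_def imat_scale_def toeplitz_def sym_plus_def)

lemma imat_upper_triangular_toeplitz_minus:
  "imat_upper_triangular (imat_scale c (toeplitz (sym_minus \<phi>)))"
  by (auto simp: imat_vanishes_on_def imat_scale_def toeplitz_def sym_minus_def)

lemma trace_section_toeplitz: "trace_section n (toeplitz a) = of_nat n * a 0"
  by (simp add: trace_section_def toeplitz_def)

theorem lemma4p2:
  fixes \<phi> :: "int \<Rightarrow> complex" and t :: complex and n :: nat
  assumes "(\<lambda>j. norm (\<phi> j)) summable_on UNIV"
  shows "fdet_section n (imat_exp (imat_scale t (toeplitz \<phi>)))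
           * exp (- t * trace_section n (toeplitz \<phi>))
         = fdet_section n
             (imat_mult (imat_exp (imat_scale (- t) (toeplitz (sym_plus \<phi>))))
               (imat_mult (imat_exp (imat_scale t (toeplitz \<phi>)))
                          (imat_exp (imat_scale (- t) (toeplitz (sym_minus \<phi>))))))"
proof -
  let ?L = "imat_exp (imat_scale (- t) (toeplitz (sym_plus \<phi>)))"
  let ?U = "imat_exp (imat_scale (- t) (toeplitz (sym_minus \<phi>)))"
  note L = imat_lower_triangular_exp[OF imat_lower_triangular_toeplitz_plus]
  note U = imat_upper_triangular_exp[OF imat_upper_triangular_toeplitz_minus]
  have "(\<Prod>i<n. ?L i i) = exp (- t * trace_section n (toeplitz \<phi>))"
    by (simp add: L(2) imat_scale_def toeplitz_def sym_plus_def trace_section_toeplitz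
        exp_of_nat_mult[symmetric] algebra_simps)
  moreover have "(\<Prod>i<n. ?U i i) = 1"
    by (simp add: U(2) imat_scale_def toeplitz_def sym_minus_def)
  ultimately show ?thesis
    by (simp add: fdet_section_triangular_mult[OF L(1) U(1)])
qed

end
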